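(* Let $\Delta$ be a finite set with $|\Delta|\ge2$, $\ell\ge2$, $\Omega=\Delta^\ell$, $W=\mathrm{Sym}\,\Delta\wr S_\ell$ in product action on $\Omega$, $G\le W$, and let $M$ be a minimal normal subgroup of $G$ transitive on $\Omega$, $M=T_1\times\cdots\times T_k$ with the $T_i$ isomorphic finite simple groups. Let $\Gamma$ be a connected graph with vertex set $\Omega$ with $G\le\mathrm{Aut}\,\Gamma$. Suppose $\Gamma$ is $M$-arc-transitive and the inclusion $G\le W$ is normal. Then $\Gamma\cong(\Gamma_1)^\ell$, where $\Gamma_1$ is the graph with vertex set $\Delta$ whose edge set is the $M^{(1)}$-orbit of $\{\alpha_1,\beta_1\}$, with $\alpha_1,\beta_1\in\Delta$ chosen so that $(\alpha_1,\dots,\alpha_1)$ and $(\beta_1,\beta_2,\dots,\beta_\ell)$ are adjacent in $\Gamma$ for some $\beta_2,\dots,\beta_\ell\in\Delta$. In particular, $\Gamma$ is not $(G,2)$-arc-transitive.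
   Context: Product action: $(\delta_1,\dots,\delta_\ell)^{(g_1,\dots,g_\ell)h}=(\delta_{1h^{-1}}g_{1h^{-1}},\dots,\delta_{\ell h^{-1}}g_{\ell h^{-1}})$. Let $\pi:W\to S_\ell$ be the natural projection, $W_j$ the stabiliser of $j$ under $\pi$, $W_j=\mathrm{Sym}\,\Delta\times(\mathrm{Sym}\,\Delta\wr S_{\ell-1})$ with the first factor on the $j$-th coordinate; the component $H^{(j)}$ of $H\le W$ is the projection of $H\cap W_j$ onto the first factor. When $M$ is non-abelian, $M^{(j)}$ is identified with the product of those $T_i$ not in the kernel of $M\to M^{(j)}$; the inclusion $G\le W$ is normal if $M$ is non-abelian and each $T_i$ lies in exactly one $M^{(j)}$ (equivalently $M=\prod_jM^{(j)}$). The direct product $(\Gamma_1)^\ell$ has vertex set $V(\Gamma_1)^\ell$, with $(\gamma_1,\dots,\gamma_\ell)$ adjacent to $(\gamma'_1,\dots,\gamma'_\ell)$ iff $\gamma_i$ is adjacent to $\gamma'_i$ in $\Gamma_1$ for all $i$. $\Gamma$ is $M$-arc-transitive if $M$ is transitive on ordered pairs of adjacent vertices; it is $(G,2)$-arc-transitive if $G$ is transitive on $2$-arcs, i.e. sequences $(v_0,v_1,v_2)$ with $v_0\sim v_1\sim v_2$ and $v_0\ne v_2$. *)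

theory Defs
  imports "HOL-Algebra.Algebra"
begin

text \<open>Omega = Delta^l, realised as extensional functions on the index set {..<l}
  (coordinates are numbered 0, ..., l-1 instead of 1, ..., l).\<close>
definition Omega :: "nat \<Rightarrow> 'a set \<Rightarrow> (nat \<Rightarrow> 'a) set" where
  "Omega l D = PiE {..<l} (\<lambda>_. D)"

text \<open>sigma is the element (g_0,...,g_{l-1}) h of Sym D wr S_l in product action:
  coordinate h j of the image of delta is g_j (delta_j).\<close>
definition wr_elem :: "nat \<Rightarrow> 'a set \<Rightarrow> (nat \<Rightarrow> nat) \<Rightarrow> (nat \<Rightarrow> 'a \<Rightarrow> 'a)
    \<Rightarrow> ((nat \<Rightarrow> 'a) \<Rightarrow> (nat \<Rightarrow> 'a)) \<Rightarrow> bool" where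
  "wr_elem l D h g \<sigma> \<longleftrightarrow> bij_betw h {..<l} {..<l}
     \<and> (\<forall>j<l. bij_betw (g j) D D)
     \<and> \<sigma> \<in> Bij (Omega l D)
     \<and> (\<forall>\<delta>\<in>Omega l D. \<forall>j<l. \<sigma> \<delta> (h j) = g j (\<delta> j))"

definition Wr :: "nat \<Rightarrow> 'a set \<Rightarrow> ((nat \<Rightarrow> 'a) \<Rightarrow> (nat \<Rightarrow> 'a)) set" where
  "Wr l D = {\<sigma>. \<exists>h g. wr_elem l D h g \<sigma>}"

text \<open>The component H^(j): projection of H \<inter> W_j onto the j-th factor Sym D.\<close>
definition component :: "nat \<Rightarrow> 'a set \<Rightarrow> ((nat \<Rightarrow> 'a) \<Rightarrow> (nat \<Rightarrow> 'a)) set \<Rightarrow> nat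
    \<Rightarrow> ('a \<Rightarrow> 'a) set" where
  "component l D H j = {restrict (g j) D | \<sigma> h g. \<sigma> \<in> H \<and> wr_elem l D h g \<sigma> \<and> h j = j}"

definition normal_inclusion :: "nat \<Rightarrow> 'a set \<Rightarrow> ((nat \<Rightarrow> 'a) \<Rightarrow> (nat \<Rightarrow> 'a)) set \<Rightarrow> bool" where
  "normal_inclusion l D M \<longleftrightarrow>
     (\<exists>a\<in>M. \<exists>b\<in>M. compose (Omega l D) a b \<noteq> compose (Omega l D) b a)
     \<and> M = {\<sigma>. \<exists>g. wr_elem l D id g \<sigma> \<and> (\<forall>j<l. restrict (g j) D \<in> component l D M j)}"

definition minimal_normal :: "'b set \<Rightarrow> ('b \<Rightarrow> 'b) set \<Rightarrow> ('b \<Rightarrow> 'b) set \<Rightarrow> bool" where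
  "minimal_normal S G M \<longleftrightarrow>
     M \<lhd> (BijGroup S)\<lparr>carrier := G\<rparr> \<and> M \<noteq> {\<lambda>x\<in>S. x}
     \<and> (\<forall>N. N \<lhd> (BijGroup S)\<lparr>carrier := G\<rparr> \<and> N \<subseteq> M \<longrightarrow> N = {\<lambda>x\<in>S. x} \<or> N = M)"

definition transitive_on :: "'b set \<Rightarrow> ('b \<Rightarrow> 'b) set \<Rightarrow> bool" where
  "transitive_on S H \<longleftrightarrow> (\<forall>x\<in>S. \<forall>y\<in>S. \<exists>m\<in>H. m x = y)"

definition graph :: "'b set \<Rightarrow> ('b \<Rightarrow> 'b \<Rightarrow> bool) \<Rightarrow> bool" where
  "graph V E \<longleftrightarrow> (\<forall>x y. E x y \<longrightarrow> x \<in> V \<and> y \<in> V \<and> x \<noteq> y \<and> E y x)"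

definition connected_graph :: "'b set \<Rightarrow> ('b \<Rightarrow> 'b \<Rightarrow> bool) \<Rightarrow> bool" where
  "connected_graph V E \<longleftrightarrow> (\<forall>x\<in>V. \<forall>y\<in>V. E\<^sup>*\<^sup>* x y)"

definition automorphisms_of :: "'b set \<Rightarrow> ('b \<Rightarrow> 'b \<Rightarrow> bool) \<Rightarrow> ('b \<Rightarrow> 'b) set" where
  "automorphisms_of V E = {\<sigma> \<in> Bij V. \<forall>x\<in>V. \<forall>y\<in>V. E (\<sigma> x) (\<sigma> y) \<longleftrightarrow> E x y}"

definition arc_transitive :: "('b \<Rightarrow> 'b) set \<Rightarrow> ('b \<Rightarrow> 'b \<Rightarrow> bool) \<Rightarrow> bool" where
  "arc_transitive H E \<longleftrightarrow>
     (\<forall>x y x' y'. E x y \<and> E x' y' \<longrightarrow> (\<exists>m\<in>H. m x = x' \<and> m y = y'))"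

definition two_arc_transitive :: "('b \<Rightarrow> 'b) set \<Rightarrow> ('b \<Rightarrow> 'b \<Rightarrow> bool) \<Rightarrow> bool" where
  "two_arc_transitive H E \<longleftrightarrow>
     (\<forall>v0 v1 v2 w0 w1 w2. E v0 v1 \<and> E v1 v2 \<and> v0 \<noteq> v2 \<and> E w0 w1 \<and> E w1 w2 \<and> w0 \<noteq> w2
        \<longrightarrow> (\<exists>m\<in>H. m v0 = w0 \<and> m v1 = w1 \<and> m v2 = w2))"

definition direct_power :: "nat \<Rightarrow> ('a \<Rightarrow> 'a \<Rightarrow> bool) \<Rightarrow> (nat \<Rightarrow> 'a) \<Rightarrow> (nat \<Rightarrow> 'a) \<Rightarrow> bool" where
  "direct_power l E1 u v \<longleftrightarrow> (\<forall>i<l. E1 (u i) (v i))"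

definition graph_iso :: "'b set \<Rightarrow> ('b \<Rightarrow> 'b \<Rightarrow> bool) \<Rightarrow> 'c set \<Rightarrow> ('c \<Rightarrow> 'c \<Rightarrow> bool) \<Rightarrow> bool" where
  "graph_iso V E V' E' \<longleftrightarrow> (\<exists>\<phi>. bij_betw \<phi> V V' \<and> (\<forall>x\<in>V. \<forall>y\<in>V. E x y \<longleftrightarrow> E' (\<phi> x) (\<phi> y)))"

definition orbit_graph :: "('a \<Rightarrow> 'a) set \<Rightarrow> 'a \<Rightarrow> 'a \<Rightarrow> 'a \<Rightarrow> 'a \<Rightarrow> bool" where
  "orbit_graph H a b x y \<longleftrightarrow> (\<exists>m\<in>H. {x, y} = {m a, m b})"

end

theory Submission
  imports Defs
begin

text \<open>
  By normality of the inclusion, M = M^(0) \<times> ... \<times> M^(l-1) acts coordinatewise, so by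
  M-arc-transitivity two vertices are adjacent iff in every coordinate j the pair of entries is an
  image of the arc (\<alpha>, \<beta> j) under M^(j). Minimality of M forces G to permute the coordinates
  transitively: otherwise the elements of M supported on the G-orbit of coordinate 0 would form a
  normal subgroup of G strictly between 1 and M. An element of G moving coordinate j to 0 carries
  the j-th factor graph onto the 0-th one, which gives \<Gamma> \<cong> (\<Gamma>_1)^l.
  Connectedness makes some vertex of \<Gamma>_1 have two neighbours; hence there are two 2-arcs
  starting with the same arc (w_0, w_1) whose last vertices differ from w_0 in exactly one
  coordinate and in all coordinates, respectively. Since G permutes coordinates, no element of G
  fixing w_0 can map the first 2-arc onto the second.
\<close>

section \<open>Product action on \<Omega> = D^l\<close>

lemma mem_Omega_iff:
  "\<delta> \<in> Omega l D \<longleftrightarrow> (\<forall>j<l. \<delta> j \<in> D) \<and> (\<forall>j. \<not> j < l \<longrightarrow> \<delta> j = undefined)"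
  by (auto simp: Omega_def PiE_iff extensional_def)

lemma Omega_eqI:
  "x \<in> Omega l D \<Longrightarrow> y \<in> Omega l D \<Longrightarrow> (\<And>j. j < l \<Longrightarrow> x j = y j) \<Longrightarrow> x = y"
  unfolding Omega_def by (rule PiE_ext) auto

lemma restrict_in_Omega: "(\<And>j. j < l \<Longrightarrow> f j \<in> D) \<Longrightarrow> (\<lambda>j\<in>{..<l}. f j) \<in> Omega l D"
  by (simp add: mem_Omega_iff)

lemma fun_upd_in_Omega: "\<delta> \<in> Omega l D \<Longrightarrow> j < l \<Longrightarrow> u \<in> D \<Longrightarrow> \<delta>(j := u) \<in> Omega l D"
  by (simp add: mem_Omega_iff)

lemma card_Omega: "card (Omega l D) = card D ^ l"
  by (simp add: Omega_def card_PiE)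

lemma Bij_apply_in: "\<sigma> \<in> Bij S \<Longrightarrow> x \<in> S \<Longrightarrow> \<sigma> x \<in> S"
  using Bij_imp_funcset by blast

definition coordwise :: "nat \<Rightarrow> 'a set \<Rightarrow> (nat \<Rightarrow> 'a \<Rightarrow> 'a) \<Rightarrow> (nat \<Rightarrow> 'a) \<Rightarrow> (nat \<Rightarrow> 'a)" where
  "coordwise l D f = (\<lambda>\<delta>\<in>Omega l D. \<lambda>j\<in>{..<l}. f j (\<delta> j))"

lemma coordwise_apply [simp]: "\<delta> \<in> Omega l D \<Longrightarrow> j < l \<Longrightarrow> coordwise l D f \<delta> j = f j (\<delta> j)"
  by (simp add: coordwise_def)

lemma coordwise_restrict: "coordwise l D (\<lambda>j. restrict (f j) D) = coordwise l D f"
  unfolding coordwise_def by (intro restrict_ext) (simp add: mem_Omega_iff)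

lemma coordwise_in_Omega:
  "(\<And>j u. j < l \<Longrightarrow> u \<in> D \<Longrightarrow> f j u \<in> D) \<Longrightarrow> \<delta> \<in> Omega l D \<Longrightarrow> coordwise l D f \<delta> \<in> Omega l D"
  by (simp add: coordwise_def restrict_in_Omega mem_Omega_iff)

lemma coordwise_in_Bij:
  assumes "\<And>j. j < l \<Longrightarrow> bij_betw (f j) D D"
  shows "coordwise l D f \<in> Bij (Omega l D)"
proof -
  let ?f' = "\<lambda>j. inv_into D (f j)"
  have f: "\<And>j u. j < l \<Longrightarrow> u \<in> D \<Longrightarrow> f j u \<in> D"
    and f': "\<And>j u. j < l \<Longrightarrow> u \<in> D \<Longrightarrow> ?f' j u \<in> D"
    using assms by (meson bij_betwE bij_betw_inv_into)+
  have inverse: "coordwise l D h (coordwise l D k \<delta>) = \<delta>"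
    if "\<delta> \<in> Omega l D" and k: "\<And>j u. j < l \<Longrightarrow> u \<in> D \<Longrightarrow> k j u \<in> D"
      and h: "\<And>j u. j < l \<Longrightarrow> u \<in> D \<Longrightarrow> h j u \<in> D"
      and hk: "\<And>j u. j < l \<Longrightarrow> u \<in> D \<Longrightarrow> h j (k j u) = u" for h k \<delta>
  proof (rule Omega_eqI[OF coordwise_in_Omega[OF h coordwise_in_Omega[OF k that(1)]] that(1)])
    fix j assume "j < l"
    moreover have "\<delta> j \<in> D"
      using \<open>j < l\<close> that(1) by (simp add: mem_Omega_iff)
    ultimately show "coordwise l D h (coordwise l D k \<delta>) j = \<delta> j"
      using that coordwise_in_Omega[OF k that(1)] by simp
  qed
  have "bij_betw (coordwise l D f) (Omega l D) (Omega l D)"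
  proof (rule bij_betw_byWitness[where f' = "coordwise l D ?f'"])
    show "\<forall>\<delta>\<in>Omega l D. coordwise l D ?f' (coordwise l D f \<delta>) = \<delta>"
    proof
      fix \<delta> assume "\<delta> \<in> Omega l D"
      show "coordwise l D ?f' (coordwise l D f \<delta>) = \<delta>"
        by (rule inverse[OF \<open>\<delta> \<in> Omega l D\<close> f f' bij_betw_inv_into_left[OF assms]])
    qed
    show "\<forall>\<delta>\<in>Omega l D. coordwise l D f (coordwise l D ?f' \<delta>) = \<delta>"
    proof
      fix \<delta> assume "\<delta> \<in> Omega l D"
      show "coordwise l D f (coordwise l D ?f' \<delta>) = \<delta>"
        by (rule inverse[OF \<open>\<delta> \<in> Omega l D\<close> f' f bij_betw_inv_into_right[OF assms]])
    qed
    show "coordwise l D f ` Omega l D \<subseteq> Omega l D" "coordwise l D ?f' ` Omega l D \<subseteq> Omega l D"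
      by (auto intro: coordwise_in_Omega f f')
  qed
  then show ?thesis
    by (simp add: Bij_def coordwise_def)
qed

lemma wr_elemD:
  assumes "wr_elem l D h g \<sigma>"
  shows "bij_betw h {..<l} {..<l}" and "\<And>j. j < l \<Longrightarrow> h j < l"
    and "\<And>j. j < l \<Longrightarrow> bij_betw (g j) D D" and "\<And>j u. j < l \<Longrightarrow> u \<in> D \<Longrightarrow> g j u \<in> D"
    and "\<sigma> \<in> Bij (Omega l D)"
    and "\<And>\<delta> j. \<delta> \<in> Omega l D \<Longrightarrow> j < l \<Longrightarrow> \<sigma> \<delta> (h j) = g j (\<delta> j)"
proof -
  show h: "bij_betw h {..<l} {..<l}" and g: "\<And>j. j < l \<Longrightarrow> bij_betw (g j) D D"
    and "\<sigma> \<in> Bij (Omega l D)"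
    and "\<And>\<delta> j. \<delta> \<in> Omega l D \<Longrightarrow> j < l \<Longrightarrow> \<sigma> \<delta> (h j) = g j (\<delta> j)"
    using assms by (simp_all add: wr_elem_def)
  show "\<And>j. j < l \<Longrightarrow> h j < l"
    using bij_betw_apply[OF h] by simp
  show "\<And>j u. j < l \<Longrightarrow> u \<in> D \<Longrightarrow> g j u \<in> D"
    using bij_betw_apply[OF g] by simp
qed

lemma wr_elem_coordwise:
  "(\<And>j. j < l \<Longrightarrow> bij_betw (f j) D D) \<Longrightarrow> wr_elem l D id f (coordwise l D f)"
  by (simp add: wr_elem_def coordwise_in_Bij)

lemma wr_elem_id_eq_coordwise:
  assumes "wr_elem l D id g \<sigma>"
  shows "\<sigma> = coordwise l D g"
proof
  fix \<delta>
  have \<sigma>: "\<sigma> \<in> Bij (Omega l D)" and act: "\<And>j. \<delta> \<in> Omega l D \<Longrightarrow> j < l \<Longrightarrow> \<sigma> \<delta> j = g j (\<delta> j)"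
    and g: "\<And>j u. j < l \<Longrightarrow> u \<in> D \<Longrightarrow> g j u \<in> D"
    using wr_elemD[OF assms] by simp_all
  show "\<sigma> \<delta> = coordwise l D g \<delta>"
  proof (cases "\<delta> \<in> Omega l D")
    case True
    then show ?thesis
      by (intro Omega_eqI[where l = l and D = D] Bij_apply_in[OF \<sigma>] coordwise_in_Omega g)
        (simp_all add: act)
  next
    case False
    then show ?thesis
      using Bij_imp_extensional[OF \<sigma>] by (simp add: coordwise_def extensional_def)
  qed
qed

lemma wr_elem_compose:
  assumes 1: "wr_elem l D h1 g1 \<sigma>1" and 2: "wr_elem l D h2 g2 \<sigma>2"
  shows "wr_elem l D (h1 \<circ> h2) (\<lambda>i. g1 (h2 i) \<circ> g2 i) (compose (Omega l D) \<sigma>1 \<sigma>2)"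
  unfolding wr_elem_def
proof (intro conjI allI impI ballI)
  show "bij_betw (h1 \<circ> h2) {..<l} {..<l}"
    using wr_elemD(1)[OF 1] wr_elemD(1)[OF 2] by (rule bij_betw_trans[rotated])
  show "compose (Omega l D) \<sigma>1 \<sigma>2 \<in> Bij (Omega l D)"
    using wr_elemD(5)[OF 1] wr_elemD(5)[OF 2] by (rule compose_Bij)
  fix j assume "j < l"
  then show "bij_betw (g1 (h2 j) \<circ> g2 j) D D"
    using wr_elemD(3)[OF 1 wr_elemD(2)[OF 2]] wr_elemD(3)[OF 2] by (blast intro: bij_betw_trans)
  fix \<delta> assume "\<delta> \<in> Omega l D"
  then show "compose (Omega l D) \<sigma>1 \<sigma>2 \<delta> ((h1 \<circ> h2) j) = (g1 (h2 j) \<circ> g2 j) (\<delta> j)"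
    using \<open>j < l\<close> Bij_apply_in[OF wr_elemD(5)[OF 2]]
    by (simp add: compose_def wr_elemD(6)[OF 1] wr_elemD(6)[OF 2] wr_elemD(2)[OF 2])
qed

lemma wr_elem_fun_upd:
  assumes \<sigma>: "wr_elem l D h g \<sigma>" and \<delta>: "\<delta> \<in> Omega l D" and "j < l" "u \<in> D"
  shows "\<sigma> (\<delta>(j := u)) = (\<sigma> \<delta>)(h j := g j u)"
proof (rule Omega_eqI)
  show "\<sigma> (\<delta>(j := u)) \<in> Omega l D"
    using \<delta> \<open>j < l\<close> \<open>u \<in> D\<close> by (simp add: Bij_apply_in[OF wr_elemD(5)[OF \<sigma>]] fun_upd_in_Omega)
  show "(\<sigma> \<delta>)(h j := g j u) \<in> Omega l D"
    using \<delta> \<open>j < l\<close> \<open>u \<in> D\<close>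
    by (simp add: Bij_apply_in[OF wr_elemD(5)[OF \<sigma>]] fun_upd_in_Omega wr_elemD(2,4)[OF \<sigma>])
  fix k assume "k < l"
  then obtain i where i: "i < l" "k = h i"
    using bij_betw_imp_surj_on[OF wr_elemD(1)[OF \<sigma>]] by (metis imageE lessThan_iff)
  have "h i = h j \<longleftrightarrow> i = j"
    using bij_betw_imp_inj_on[OF wr_elemD(1)[OF \<sigma>]] i(1) \<open>j < l\<close> by (simp add: inj_on_eq_iff)
  then show "\<sigma> (\<delta>(j := u)) k = ((\<sigma> \<delta>)(h j := g j u)) k"
    using i \<delta> \<open>j < l\<close> \<open>u \<in> D\<close> by (simp add: wr_elemD(6)[OF \<sigma>] fun_upd_in_Omega)
qed

lemma component_bij_betw:
  "c \<in> component l D H j \<Longrightarrow> j < l \<Longrightarrow> bij_betw c D D"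
  by (auto simp: component_def wr_elem_def)

lemma component_extensional:
  "c \<in> component l D H j \<Longrightarrow> c \<in> extensional D"
  by (auto simp: component_def)

lemma wr_elem_id: "wr_elem l D id (\<lambda>_ u. u) (\<lambda>\<delta>\<in>Omega l D. \<delta>)"
  by (simp add: wr_elem_def id_Bij bij_betw_id[unfolded id_def])

lemma restrict_id_in_component:
  assumes "(\<lambda>\<delta>\<in>Omega l D. \<delta>) \<in> H" "j < l"
  shows "(\<lambda>u\<in>D. u) \<in> component l D H j"
  using assms wr_elem_id unfolding component_def by fastforce

section \<open>Graphs\<close>

definition functional_on :: "'b set \<Rightarrow> ('b \<Rightarrow> 'b \<Rightarrow> bool) \<Rightarrow> bool" where
  "functional_on V R \<longleftrightarrow> (\<forall>x\<in>V. \<forall>y\<in>V. \<forall>y'\<in>V. R x y \<longrightarrow> R x y' \<longrightarrow> y = y')"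

lemma functional_on_transfer:
  assumes "bij_betw f V W" and "\<forall>x\<in>V. \<forall>y\<in>V. R x y \<longleftrightarrow> S (f x) (f y)"
  shows "functional_on V R \<longleftrightarrow> functional_on W S"
proof -
  have "f ` V = W" and "inj_on f V"
    using assms(1) by (auto simp: bij_betw_def)
  with assms(2) show ?thesis
    unfolding functional_on_def by (auto simp: inj_on_eq_iff)
qed

lemma connected_functional_graph_subset:
  assumes "graph V E" "connected_graph V E" "E x y" "functional_on V E"
  shows "V \<subseteq> {x, y}"
proof
  fix w assume "w \<in> V"
  have "E y x" "x \<in> V" "y \<in> V"
    using assms(1,3) by (auto simp: graph_def)
  then have "E\<^sup>*\<^sup>* x w"
    using assms(2) \<open>w \<in> V\<close> by (simp add: connected_graph_def)
  then show "w \<in> {x, y}"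
  proof (induction rule: rtranclp_induct)
    case (step w w')
    then have "w' \<in> V" "w \<in> V"
      using assms(1) by (auto simp: graph_def)
    with step assms(3,4) \<open>E y x\<close> \<open>x \<in> V\<close> \<open>y \<in> V\<close> show ?case
      by (auto simp: functional_on_def)
  qed simp
qed

lemma connected_graph_neighbour:
  assumes "connected_graph V E" "x \<in> V" "y \<in> V" "x \<noteq> y"
  obtains z where "E x z"
proof -
  have "E\<^sup>*\<^sup>* x y"
    using assms by (simp add: connected_graph_def)
  then show thesis
    by (rule converse_rtranclpE) (use assms(4) that in auto)
qed

lemma graph_iso_direct_powerI:
  assumes "\<And>j. j < l \<Longrightarrow> bij_betw (f j) D D"
    and "\<forall>x\<in>Omega l D. \<forall>y\<in>Omega l D. E x y \<longleftrightarrow> (\<forall>j<l. R (f j (x j)) (f j (y j)))"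
  shows "graph_iso (Omega l D) E (Omega l D) (direct_power l R)"
  unfolding graph_iso_def
proof (intro exI conjI)
  show "bij_betw (coordwise l D f) (Omega l D) (Omega l D)"
    using coordwise_in_Bij[OF assms(1)] by (simp add: Bij_def)
  show "\<forall>x\<in>Omega l D. \<forall>y\<in>Omega l D. E x y \<longleftrightarrow> direct_power l R (coordwise l D f x) (coordwise l D f y)"
    using assms(2) by (simp add: direct_power_def)
qed

section \<open>G permutes the coordinates transitively\<close>

locale wreath_minimal_normal =
  fixes D :: "'a set" and l :: nat and G M :: "((nat \<Rightarrow> 'a) \<Rightarrow> (nat \<Rightarrow> 'a)) set"
  assumes card_D: "card D \<ge> 2"
    and subgroup_G: "subgroup G (BijGroup (Omega l D))" and G_subset_Wr: "G \<subseteq> Wr l D"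
    and minimal_normal_M: "minimal_normal (Omega l D) G M"
    and transitive_M: "transitive_on (Omega l D) M"
    and normal_inclusion_M: "normal_inclusion l D M"
begin

abbreviation "\<Omega> \<equiv> Omega l D"
abbreviation "grp \<equiv> (BijGroup \<Omega>)\<lparr>carrier := G\<rparr>"
abbreviation "C \<equiv> component l D M"

lemma group_grp: "group grp"
  using subgroup_G group_BijGroup subgroup.subgroup_is_group by blast

lemma normal_M: "M \<lhd> grp"
  using minimal_normal_M by (simp add: minimal_normal_def)

lemma M_subset_G: "M \<subseteq> G"
  using normal_imp_subgroup[OF normal_M] subgroup.subset by fastforce

lemma G_subset_Bij: "G \<subseteq> Bij \<Omega>"
  using subgroup.subset[OF subgroup_G] by (simp add: BijGroup_def)

lemma G_apply_in_Omega: "\<sigma> \<in> G \<Longrightarrow> \<delta> \<in> \<Omega> \<Longrightarrow> \<sigma> \<delta> \<in> \<Omega>"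
  by (rule Bij_apply_in[OF subsetD[OF G_subset_Bij]])

lemma mult_grp: "x \<in> G \<Longrightarrow> y \<in> G \<Longrightarrow> x \<otimes>\<^bsub>grp\<^esub> y = compose \<Omega> x y"
  using G_subset_Bij by (auto simp: BijGroup_def)

lemma one_grp: "\<one>\<^bsub>grp\<^esub> = (\<lambda>\<delta>\<in>\<Omega>. \<delta>)"
  by (simp add: BijGroup_def)

lemma id_in_M: "(\<lambda>\<delta>\<in>\<Omega>. \<delta>) \<in> M"
  using subgroup.one_closed[OF normal_imp_subgroup[OF normal_M]] by (simp add: one_grp)

lemma mult_grp_closed: "x \<in> G \<Longrightarrow> y \<in> G \<Longrightarrow> x \<otimes>\<^bsub>grp\<^esub> y \<in> G"
  using monoid.m_closed[OF group.is_monoid[OF group_grp]] by simp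

lemma inv_grp_closed: "x \<in> G \<Longrightarrow> inv\<^bsub>grp\<^esub> x \<in> G"
  using group.inv_closed[OF group_grp] by fastforce

lemma apply_inv_grp:
  assumes "x \<in> G" "\<delta> \<in> \<Omega>"
  shows "x ((inv\<^bsub>grp\<^esub> x) \<delta>) = \<delta>"
proof -
  have "compose \<Omega> x (inv\<^bsub>grp\<^esub> x) = x \<otimes>\<^bsub>grp\<^esub> inv\<^bsub>grp\<^esub> x"
    using mult_grp[OF assms(1) inv_grp_closed[OF assms(1)]] by simp
  also have "\<dots> = \<one>\<^bsub>grp\<^esub>"
    using group.r_inv[OF group_grp] assms(1) by simp
  finally have "compose \<Omega> x (inv\<^bsub>grp\<^esub> x) \<delta> = \<delta>"
    using assms(2) by (simp add: one_grp)
  then show ?thesis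
    using assms(2) by (simp add: compose_def)
qed

lemma G_wr_elem: "\<sigma> \<in> G \<Longrightarrow> \<exists>h g. wr_elem l D h g \<sigma>"
  using G_subset_Wr by (auto simp: Wr_def)

lemma mem_M_iff: "\<sigma> \<in> M \<longleftrightarrow> (\<exists>g. wr_elem l D id g \<sigma> \<and> (\<forall>j<l. restrict (g j) D \<in> C j))"
proof -
  have "M = {\<sigma>. \<exists>g. wr_elem l D id g \<sigma> \<and> (\<forall>j<l. restrict (g j) D \<in> C j)}"
    using normal_inclusion_M unfolding normal_inclusion_def by (rule conjunct2)
  then show ?thesis
    by (rule arg_cong[where f = "\<lambda>S. \<sigma> \<in> S", THEN trans]) simp
qed

lemma M_iff_coordwise: "\<sigma> \<in> M \<longleftrightarrow> (\<exists>c. (\<forall>j<l. c j \<in> C j) \<and> \<sigma> = coordwise l D c)"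
proof
  assume "\<sigma> \<in> M"
  then obtain g where g: "wr_elem l D id g \<sigma>" "\<forall>j<l. restrict (g j) D \<in> C j"
    unfolding mem_M_iff by blast
  then have "\<sigma> = coordwise l D (\<lambda>j. restrict (g j) D)"
    using wr_elem_id_eq_coordwise[OF g(1)] by (simp add: coordwise_restrict)
  with g(2) show "\<exists>c. (\<forall>j<l. c j \<in> C j) \<and> \<sigma> = coordwise l D c"
    by (intro exI[of _ "\<lambda>j. restrict (g j) D"]) simp
next
  assume "\<exists>c. (\<forall>j<l. c j \<in> C j) \<and> \<sigma> = coordwise l D c"
  then obtain c where c: "\<And>j. j < l \<Longrightarrow> c j \<in> C j" and \<sigma>: "\<sigma> = coordwise l D c"
    by blast
  have "wr_elem l D id c \<sigma>"
    unfolding \<sigma> by (rule wr_elem_coordwise[OF component_bij_betw[OF c]])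
  moreover have "\<forall>j<l. restrict (c j) D \<in> C j"
    using c extensional_restrict[OF component_extensional[OF c]] by simp
  ultimately show "\<sigma> \<in> M"
    unfolding mem_M_iff by (intro exI conjI)
qed

lemma obtain_distinct_in_D:
  obtains \<alpha> d where "\<alpha> \<in> D" "d \<in> D" "d \<noteq> \<alpha>"
proof -
  obtain \<alpha> where "\<alpha> \<in> D"
    using card_D by fastforce
  moreover have "\<not> D \<subseteq> {\<alpha>}"
    using card_D card_mono[of "{\<alpha>}" D] by auto
  ultimately show thesis
    using that by blast
qed

lemma M_moves_coordinate:
  assumes "j < l"
  obtains \<alpha> m where "\<alpha> \<in> D" "m \<in> M" "m (\<lambda>i\<in>{..<l}. \<alpha>) j \<noteq> \<alpha>"
proof -
  obtain \<alpha> d where "\<alpha> \<in> D" "d \<in> D" "d \<noteq> \<alpha>"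
    by (rule obtain_distinct_in_D)
  moreover have "(\<lambda>i\<in>{..<l}. \<alpha>) \<in> \<Omega>" "(\<lambda>i\<in>{..<l}. \<alpha>)(j := d) \<in> \<Omega>"
    using \<open>\<alpha> \<in> D\<close> \<open>d \<in> D\<close> assms by (simp_all add: restrict_in_Omega fun_upd_in_Omega)
  then obtain m where "m \<in> M" "m (\<lambda>i\<in>{..<l}. \<alpha>) = (\<lambda>i\<in>{..<l}. \<alpha>)(j := d)"
    using transitive_M by (meson transitive_on_def)
  ultimately show thesis
    using that by simp
qed

definition supported_on :: "nat set \<Rightarrow> ((nat \<Rightarrow> 'a) \<Rightarrow> (nat \<Rightarrow> 'a)) set" where
  "supported_on S = {\<sigma> \<in> M. \<forall>i<l. i \<notin> S \<longrightarrow> (\<forall>\<delta>\<in>\<Omega>. \<sigma> \<delta> i = \<delta> i)}"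

definition invariant_coords :: "nat set \<Rightarrow> bool" where
  "invariant_coords S \<longleftrightarrow> (\<forall>\<sigma>\<in>G. \<forall>h g. wr_elem l D h g \<sigma> \<longrightarrow> (\<forall>k<l. h k \<in> S \<longrightarrow> k \<in> S))"

lemma subgroup_supported_on: "subgroup (supported_on S) grp"
proof -
  have M: "subgroup M grp"
    using normal_M normal_imp_subgroup by blast
  have sub: "supported_on S \<subseteq> G"
    using M_subset_G by (auto simp: supported_on_def)
  show ?thesis
  proof
    show "supported_on S \<subseteq> carrier grp"
      using sub by simp
    show "\<one>\<^bsub>grp\<^esub> \<in> supported_on S"
      using id_in_M by (simp add: supported_on_def one_grp)
  next
    fix a b assume ab: "a \<in> supported_on S" "b \<in> supported_on S"
    then have "a \<otimes>\<^bsub>grp\<^esub> b \<in> M"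
      using subgroup.m_closed[OF M] by (simp add: supported_on_def)
    moreover have "(a \<otimes>\<^bsub>grp\<^esub> b) \<delta> = a (b \<delta>)" if "\<delta> \<in> \<Omega>" for \<delta>
      using mult_grp[OF subsetD[OF sub ab(1)] subsetD[OF sub ab(2)]] that by (simp add: compose_def)
    ultimately show "a \<otimes>\<^bsub>grp\<^esub> b \<in> supported_on S"
      using ab sub G_apply_in_Omega by (simp add: supported_on_def subset_iff)
  next
    fix a assume a: "a \<in> supported_on S"
    then have "inv\<^bsub>grp\<^esub> a \<in> M"
      using subgroup.m_inv_closed[OF M] by (simp add: supported_on_def)
    moreover have "(inv\<^bsub>grp\<^esub> a) \<delta> i = \<delta> i" if "\<delta> \<in> \<Omega>" "i < l" "i \<notin> S" for \<delta> i
    proof -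
      have "a \<in> G"
        using a sub by blast
      then have "a ((inv\<^bsub>grp\<^esub> a) \<delta>) i = (inv\<^bsub>grp\<^esub> a) \<delta> i"
        using a that inv_grp_closed G_apply_in_Omega by (simp add: supported_on_def)
      then show ?thesis
        using apply_inv_grp[OF \<open>a \<in> G\<close> \<open>\<delta> \<in> \<Omega>\<close>] by simp
    qed
    ultimately show "inv\<^bsub>grp\<^esub> a \<in> supported_on S"
      by (simp add: supported_on_def)
  qed
qed


lemma conj_in_supported_on:
  assumes inv: "invariant_coords S"
    and x: "x \<in> G" and n: "n \<in> supported_on S"
  shows "inv\<^bsub>grp\<^esub> x \<otimes>\<^bsub>grp\<^esub> n \<otimes>\<^bsub>grp\<^esub> x \<in> supported_on S"
proof -
  obtain h g where wr: "wr_elem l D h g x"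
    using G_wr_elem[OF x] by blast
  have "n \<in> M" "n \<in> G"
    using n M_subset_G by (auto simp: supported_on_def)
  have conj_M: "inv\<^bsub>grp\<^esub> x \<otimes>\<^bsub>grp\<^esub> n \<otimes>\<^bsub>grp\<^esub> x \<in> M"
    using normal.inv_op_closed1[OF normal_M] x \<open>n \<in> M\<close> by simp
  have "(inv\<^bsub>grp\<^esub> x \<otimes>\<^bsub>grp\<^esub> n \<otimes>\<^bsub>grp\<^esub> x) \<delta> k = \<delta> k" if "\<delta> \<in> \<Omega>" "k < l" "k \<notin> S" for \<delta> k
  proof -
    define t where "t = (inv\<^bsub>grp\<^esub> x) (n (x \<delta>))"
    have t: "t \<in> \<Omega>" and xt: "x t = n (x \<delta>)"
      using x \<open>n \<in> G\<close> \<open>\<delta> \<in> \<Omega>\<close> by (simp_all add: t_def G_apply_in_Omega inv_grp_closed apply_inv_grp)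
    have act: "\<And>\<delta>'. \<delta>' \<in> \<Omega> \<Longrightarrow> x \<delta>' (h k) = g k (\<delta>' k)" and "bij_betw (g k) D D"
      using wr_elemD(3,6)[OF wr] \<open>k < l\<close> by simp_all
    have "h k < l" "h k \<notin> S"
      using wr_elemD(2)[OF wr] that inv x wr by (auto simp: invariant_coords_def)
    have "g k (t k) = n (x \<delta>) (h k)"
      using act[OF t] xt by simp
    also have "\<dots> = x \<delta> (h k)"
      using n \<open>h k < l\<close> \<open>h k \<notin> S\<close> G_apply_in_Omega[OF x \<open>\<delta> \<in> \<Omega>\<close>] by (simp add: supported_on_def)
    also have "\<dots> = g k (\<delta> k)"
      using act[OF \<open>\<delta> \<in> \<Omega>\<close>] .
    finally have "g k (t k) = g k (\<delta> k)" .
    moreover have "t k \<in> D" "\<delta> k \<in> D"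
      using t \<open>\<delta> \<in> \<Omega>\<close> \<open>k < l\<close> by (simp_all add: mem_Omega_iff)
    ultimately have "t k = \<delta> k"
      using bij_betw_imp_inj_on[OF \<open>bij_betw (g k) D D\<close>] by (simp add: inj_on_eq_iff)
    moreover have "(inv\<^bsub>grp\<^esub> x \<otimes>\<^bsub>grp\<^esub> n \<otimes>\<^bsub>grp\<^esub> x) \<delta> = t"
    proof -
      have "inv\<^bsub>grp\<^esub> x \<in> G" "inv\<^bsub>grp\<^esub> x \<otimes>\<^bsub>grp\<^esub> n \<in> G"
        using inv_grp_closed[OF x] mult_grp_closed[OF inv_grp_closed[OF x] \<open>n \<in> G\<close>] by blast+
      then show ?thesis
        using mult_grp[OF _ x] mult_grp[OF _ \<open>n \<in> G\<close>] G_apply_in_Omega[OF x \<open>\<delta> \<in> \<Omega>\<close>]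
          \<open>\<delta> \<in> \<Omega>\<close> by (simp add: t_def compose_def)
    qed
    ultimately show ?thesis
      by simp
  qed
  with conj_M show ?thesis
    by (simp add: supported_on_def)
qed

lemma normal_supported_on:
  assumes "invariant_coords S"
  shows "supported_on S \<lhd> grp"
  unfolding group.normal_inv_iff[OF group_grp]
proof (intro conjI ballI subgroup_supported_on)
  fix x n assume "x \<in> carrier grp" "n \<in> supported_on S"
  then have "x \<in> G"
    by simp
  have "inv\<^bsub>grp\<^esub> (inv\<^bsub>grp\<^esub> x) \<otimes>\<^bsub>grp\<^esub> n \<otimes>\<^bsub>grp\<^esub> inv\<^bsub>grp\<^esub> x \<in> supported_on S"
    using assms inv_grp_closed[OF \<open>x \<in> G\<close>] \<open>n \<in> supported_on S\<close> by (rule conj_in_supported_on)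
  then show "x \<otimes>\<^bsub>grp\<^esub> n \<otimes>\<^bsub>grp\<^esub> inv\<^bsub>grp\<^esub> x \<in> supported_on S"
    using group.inv_inv[OF group_grp \<open>x \<in> carrier grp\<close>] by simp
qed

lemma supported_on_nontrivial:
  assumes "j \<in> S" "j < l"
  shows "supported_on S \<noteq> {\<lambda>\<delta>\<in>\<Omega>. \<delta>}"
proof -
  obtain \<alpha> m where \<alpha>: "\<alpha> \<in> D" and "m \<in> M" and moved: "m (\<lambda>i\<in>{..<l}. \<alpha>) j \<noteq> \<alpha>"
    using M_moves_coordinate[OF \<open>j < l\<close>] .
  then obtain c where c: "\<And>i. i < l \<Longrightarrow> c i \<in> C i" and m: "m = coordwise l D c"
    unfolding M_iff_coordwise by blast
  define n where "n = coordwise l D ((\<lambda>i. \<lambda>u\<in>D. u)(j := c j))"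
  have "n \<in> M"
    unfolding n_def M_iff_coordwise
    by (rule exI[of _ "(\<lambda>i. \<lambda>u\<in>D. u)(j := c j)"]) (use c restrict_id_in_component[OF id_in_M] in auto)
  moreover have "n \<delta> i = \<delta> i" if "\<delta> \<in> \<Omega>" "i < l" "i \<notin> S" for \<delta> i
    using that assms(1) by (auto simp: n_def mem_Omega_iff)
  ultimately have "n \<in> supported_on S"
    by (simp add: supported_on_def)
  moreover have "n (\<lambda>i\<in>{..<l}. \<alpha>) \<noteq> (\<lambda>\<delta>\<in>\<Omega>. \<delta>) (\<lambda>i\<in>{..<l}. \<alpha>)"
    using moved \<alpha> \<open>j < l\<close> by (auto simp: n_def m restrict_in_Omega dest: fun_cong[where x = j])
  ultimately show ?thesis
    by auto
qed

lemma supported_on_proper: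
  assumes "j \<notin> S" "j < l"
  shows "supported_on S \<noteq> M"
proof -
  obtain \<alpha> m where "\<alpha> \<in> D" "m \<in> M" and moved: "m (\<lambda>i\<in>{..<l}. \<alpha>) j \<noteq> \<alpha>"
    using M_moves_coordinate[OF \<open>j < l\<close>] .
  have "m \<notin> supported_on S"
  proof
    assume "m \<in> supported_on S"
    moreover have "(\<lambda>i\<in>{..<l}. \<alpha>) \<in> \<Omega>"
      using \<open>\<alpha> \<in> D\<close> by (simp add: restrict_in_Omega)
    ultimately have "m (\<lambda>i\<in>{..<l}. \<alpha>) j = \<alpha>"
      using assms by (simp add: supported_on_def)
    with moved show False ..
  qed
  with \<open>m \<in> M\<close> show ?thesis
    by blast
qed

text \<open>Otherwise supported_on S would lie strictly between 1 and M, contradicting minimality.\<close>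

lemma invariant_coords_all:
  assumes "invariant_coords S"
    and "i \<in> S" "i < l"
  shows "{..<l} \<subseteq> S"
proof
  fix j assume "j \<in> {..<l}"
  show "j \<in> S"
  proof (rule ccontr)
    assume "j \<notin> S"
    have "supported_on S \<subseteq> M"
      by (auto simp: supported_on_def)
    then have "supported_on S = {\<lambda>\<delta>\<in>\<Omega>. \<delta>} \<or> supported_on S = M"
      using minimal_normal_M normal_supported_on[OF assms(1)] by (simp add: minimal_normal_def)
    then show False
      using supported_on_nontrivial[OF assms(2,3)] supported_on_proper[OF \<open>j \<notin> S\<close>] \<open>j \<in> {..<l}\<close>
      by auto
  qed
qed

lemma coordinate_transitive:
  assumes "j < l"
  obtains \<sigma> h g where "\<sigma> \<in> G" "wr_elem l D h g \<sigma>" "h j = 0"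
proof -
  define S where "S = {k. \<exists>\<sigma>\<in>G. \<exists>h g. wr_elem l D h g \<sigma> \<and> h k = 0}"
  have "invariant_coords S"
    unfolding invariant_coords_def
  proof (intro ballI allI impI)
    fix \<sigma> h g k assume \<sigma>: "\<sigma> \<in> G" "wr_elem l D h g \<sigma>" and "h k \<in> S"
    then obtain \<sigma>' h' g' where \<sigma>': "\<sigma>' \<in> G" "wr_elem l D h' g' \<sigma>'" "h' (h k) = 0"
      unfolding S_def by blast
    have "wr_elem l D (h' \<circ> h) (\<lambda>i. g' (h i) \<circ> g i) (\<sigma>' \<otimes>\<^bsub>grp\<^esub> \<sigma>)"
      using wr_elem_compose[OF \<sigma>'(2) \<sigma>(2)] mult_grp[OF \<sigma>'(1) \<sigma>(1)] by simp
    then show "k \<in> S"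
      unfolding S_def using mult_grp_closed[OF \<sigma>'(1) \<sigma>(1)] \<sigma>'(3)
      by (intro CollectI bexI[of _ "\<sigma>' \<otimes>\<^bsub>grp\<^esub> \<sigma>"] exI[of _ "h' \<circ> h"] exI conjI) simp_all
  qed
  moreover have "0 \<in> S"
    unfolding S_def using subsetD[OF M_subset_G id_in_M] wr_elem_id
    by (intro CollectI bexI[of _ "\<lambda>\<delta>\<in>\<Omega>. \<delta>"] exI[of _ id] exI conjI) simp_all
  ultimately have "{..<l} \<subseteq> S"
    by (rule invariant_coords_all) (use assms in linarith)
  then show thesis
    using that \<open>j < l\<close> unfolding S_def by blast
qed

end

section \<open>The factor graphs\<close>

locale wreath_arc_graph = wreath_minimal_normal D l G M
  for D :: "'a set" and l G M +
  fixes E :: "(nat \<Rightarrow> 'a) \<Rightarrow> (nat \<Rightarrow> 'a) \<Rightarrow> bool" and \<alpha> :: 'a and \<beta> :: "nat \<Rightarrow> 'a"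
  assumes graph_E: "graph (Omega l D) E"
    and G_automorphisms: "G \<subseteq> automorphisms_of (Omega l D) E"
    and arc_transitive_M: "arc_transitive M E"
    and \<alpha>_in_D: "\<alpha> \<in> D"
    and adjacent_\<alpha>_\<beta>: "E (\<lambda>i\<in>{..<l}. \<alpha>) \<beta>"
begin

abbreviation "\<alpha>\<^sub>\<Omega> \<equiv> \<lambda>i\<in>{..<l}. \<alpha>"

lemma adjacent_in_Omega: "E x y \<Longrightarrow> x \<in> \<Omega> \<and> y \<in> \<Omega>"
  using graph_E by (simp add: graph_def)

lemma adjacent_sym: "E x y \<Longrightarrow> E y x"
  using graph_E by (simp add: graph_def)

lemma G_preserves_adjacency: "\<sigma> \<in> G \<Longrightarrow> x \<in> \<Omega> \<Longrightarrow> y \<in> \<Omega> \<Longrightarrow> E (\<sigma> x) (\<sigma> y) \<longleftrightarrow> E x y"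
  using G_automorphisms by (auto simp: automorphisms_of_def)

lemma \<alpha>\<^sub>\<Omega>_in_Omega: "\<alpha>\<^sub>\<Omega> \<in> \<Omega>"
  using \<alpha>_in_D by (simp add: restrict_in_Omega)

lemma \<beta>_in_Omega: "\<beta> \<in> \<Omega>"
  using adjacent_in_Omega[OF adjacent_\<alpha>_\<beta>] ..

text \<open>Arc relation of the j-th factor graph; C j is the component M^(j) of the paper.\<close>

definition coord_rel :: "nat \<Rightarrow> 'a \<Rightarrow> 'a \<Rightarrow> bool" where
  "coord_rel j u v \<longleftrightarrow> (\<exists>c\<in>C j. u = c \<alpha> \<and> v = c (\<beta> j))"

lemma coord_rel_in_D:
  assumes "coord_rel j u v" "j < l"
  shows "u \<in> D" "v \<in> D"
proof -
  obtain c where "c \<in> C j" "u = c \<alpha>" "v = c (\<beta> j)"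
    using assms(1) unfolding coord_rel_def by blast
  moreover have "\<beta> j \<in> D"
    using \<beta>_in_Omega assms(2) by (simp add: mem_Omega_iff)
  moreover have "bij_betw c D D"
    using component_bij_betw \<open>c \<in> C j\<close> assms(2) by blast
  ultimately show "u \<in> D" "v \<in> D"
    using \<alpha>_in_D by (simp_all add: bij_betw_apply)
qed

lemma adjacent_iff_coord_rel:
  "E x y \<longleftrightarrow> x \<in> \<Omega> \<and> y \<in> \<Omega> \<and> (\<forall>j<l. coord_rel j (x j) (y j))"
proof
  assume "E x y"
  then obtain m where "m \<in> M" "m \<alpha>\<^sub>\<Omega> = x" "m \<beta> = y"
    using arc_transitive_M adjacent_\<alpha>_\<beta> unfolding arc_transitive_def by blast
  moreover obtain c where "\<And>j. j < l \<Longrightarrow> c j \<in> C j" "m = coordwise l D c"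
    using \<open>m \<in> M\<close> unfolding M_iff_coordwise by blast
  ultimately show "x \<in> \<Omega> \<and> y \<in> \<Omega> \<and> (\<forall>j<l. coord_rel j (x j) (y j))"
    using adjacent_in_Omega[OF \<open>E x y\<close>] \<alpha>\<^sub>\<Omega>_in_Omega \<beta>_in_Omega by (auto simp: coord_rel_def)
next
  assume "x \<in> \<Omega> \<and> y \<in> \<Omega> \<and> (\<forall>j<l. coord_rel j (x j) (y j))"
  then obtain c where c: "\<And>j. j < l \<Longrightarrow> c j \<in> C j \<and> x j = c j \<alpha> \<and> y j = c j (\<beta> j)"
    and "x \<in> \<Omega>" "y \<in> \<Omega>"
    unfolding coord_rel_def by metis
  define m where "m = coordwise l D c"
  have "m \<in> M"
    unfolding m_def M_iff_coordwise using c by blast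
  then have "m \<in> G"
    using M_subset_G by blast
  have "m \<alpha>\<^sub>\<Omega> = x" "m \<beta> = y"
    using c \<alpha>\<^sub>\<Omega>_in_Omega \<beta>_in_Omega \<open>x \<in> \<Omega>\<close> \<open>y \<in> \<Omega>\<close> G_apply_in_Omega[OF \<open>m \<in> G\<close>]
    by (auto intro!: Omega_eqI simp: m_def)
  then show "E x y"
    using adjacent_\<alpha>_\<beta> G_preserves_adjacency[OF \<open>m \<in> G\<close> \<alpha>\<^sub>\<Omega>_in_Omega \<beta>_in_Omega] by simp
qed

lemma adjacent_fun_upd_iff:
  assumes "E p q" "k < l" "u \<in> D" "v \<in> D"
  shows "E (p(k := u)) (q(k := v)) \<longleftrightarrow> coord_rel k u v"
  using assms unfolding adjacent_iff_coord_rel by (auto simp: fun_upd_in_Omega)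

lemma coord_rel_sym:
  assumes "coord_rel j u v" "j < l"
  shows "coord_rel j v u"
proof -
  have "E (\<alpha>\<^sub>\<Omega>(j := u)) (\<beta>(j := v))"
    using assms coord_rel_in_D[OF assms] adjacent_fun_upd_iff[OF adjacent_\<alpha>_\<beta>] by simp
  then have "E (\<beta>(j := v)) (\<alpha>\<^sub>\<Omega>(j := u))"
    by (rule adjacent_sym)
  then show ?thesis
    using assms(2) unfolding adjacent_iff_coord_rel by auto
qed

lemma coord_rel_iso_0:
  assumes "j < l"
  shows "\<exists>f. bij_betw f D D \<and> (\<forall>u\<in>D. \<forall>v\<in>D. coord_rel j u v \<longleftrightarrow> coord_rel 0 (f u) (f v))"
proof -
  obtain \<sigma> h g where "\<sigma> \<in> G" and \<sigma>: "wr_elem l D h g \<sigma>" and "h j = 0"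
    using coordinate_transitive[OF assms] .
  have "E (\<sigma> \<alpha>\<^sub>\<Omega>) (\<sigma> \<beta>)"
    using adjacent_\<alpha>_\<beta> G_preserves_adjacency[OF \<open>\<sigma> \<in> G\<close> \<alpha>\<^sub>\<Omega>_in_Omega \<beta>_in_Omega] by simp
  have "coord_rel j u v \<longleftrightarrow> coord_rel 0 (g j u) (g j v)" if "u \<in> D" "v \<in> D" for u v
  proof -
    have "coord_rel j u v \<longleftrightarrow> E (\<alpha>\<^sub>\<Omega>(j := u)) (\<beta>(j := v))"
      using adjacent_fun_upd_iff[OF adjacent_\<alpha>_\<beta> assms that] ..
    also have "\<dots> \<longleftrightarrow> E (\<sigma> (\<alpha>\<^sub>\<Omega>(j := u))) (\<sigma> (\<beta>(j := v)))"
      using G_preserves_adjacency[OF \<open>\<sigma> \<in> G\<close>] \<alpha>\<^sub>\<Omega>_in_Omega \<beta>_in_Omega assms that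
      by (simp add: fun_upd_in_Omega)
    also have "\<dots> \<longleftrightarrow> E ((\<sigma> \<alpha>\<^sub>\<Omega>)(0 := g j u)) ((\<sigma> \<beta>)(0 := g j v))"
      using wr_elem_fun_upd[OF \<sigma>] \<alpha>\<^sub>\<Omega>_in_Omega \<beta>_in_Omega assms that \<open>h j = 0\<close> by simp
    also have "\<dots> \<longleftrightarrow> coord_rel 0 (g j u) (g j v)"
      using adjacent_fun_upd_iff[OF \<open>E (\<sigma> \<alpha>\<^sub>\<Omega>) (\<sigma> \<beta>)\<close>] wr_elemD(4)[OF \<sigma>] assms that by simp
    finally show ?thesis .
  qed
  then show ?thesis
    using wr_elemD(3)[OF \<sigma> assms] by blast
qed

lemma orbit_graph_iff_coord_rel:
  assumes "0 < l"
  shows "orbit_graph (C 0) \<alpha> (\<beta> 0) u v \<longleftrightarrow> coord_rel 0 u v"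
proof
  assume "orbit_graph (C 0) \<alpha> (\<beta> 0) u v"
  then obtain c where "c \<in> C 0" "{u, v} = {c \<alpha>, c (\<beta> 0)}"
    by (auto simp: orbit_graph_def)
  then have "coord_rel 0 u v \<or> coord_rel 0 v u"
    unfolding coord_rel_def doubleton_eq_iff by blast
  then show "coord_rel 0 u v"
    using coord_rel_sym assms by blast
qed (auto simp: orbit_graph_def coord_rel_def)

lemma graph_iso_direct_power: "graph_iso \<Omega> E \<Omega> (direct_power l (orbit_graph (C 0) \<alpha> (\<beta> 0)))"
proof -
  have "\<forall>j\<in>{..<l}. \<exists>f. bij_betw f D D \<and> (\<forall>u\<in>D. \<forall>v\<in>D. coord_rel j u v \<longleftrightarrow> coord_rel 0 (f u) (f v))"
    using coord_rel_iso_0 by simp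
  then obtain f where f: "\<And>j. j < l \<Longrightarrow> bij_betw (f j) D D"
    and rel: "\<And>j u v. j < l \<Longrightarrow> u \<in> D \<Longrightarrow> v \<in> D \<Longrightarrow> coord_rel j u v \<longleftrightarrow> coord_rel 0 (f j u) (f j v)"
    by (auto dest!: bchoice)
  have "\<forall>x\<in>\<Omega>. \<forall>y\<in>\<Omega>. E x y \<longleftrightarrow> (\<forall>j<l. orbit_graph (C 0) \<alpha> (\<beta> 0) (f j (x j)) (f j (y j)))"
  proof (intro ballI)
    fix x y assume xy: "x \<in> \<Omega>" "y \<in> \<Omega>"
    have "E x y \<longleftrightarrow> (\<forall>j<l. coord_rel 0 (f j (x j)) (f j (y j)))"
      unfolding adjacent_iff_coord_rel using xy rel by (auto simp: mem_Omega_iff)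
    also have "\<dots> \<longleftrightarrow> (\<forall>j<l. orbit_graph (C 0) \<alpha> (\<beta> 0) (f j (x j)) (f j (y j)))"
      using orbit_graph_iff_coord_rel by auto
    finally show "E x y \<longleftrightarrow> (\<forall>j<l. orbit_graph (C 0) \<alpha> (\<beta> 0) (f j (x j)) (f j (y j)))" .
  qed
  with f show ?thesis
    by (rule graph_iso_direct_powerI)
qed

text \<open>Were each vertex to have one neighbour, the connected graph would be a single edge,
  but it has at least 2^2 vertices.\<close>

lemma coord_rel_not_functional:
  assumes "connected_graph \<Omega> E" "2 \<le> l" "j < l"
  shows "\<not> functional_on D (coord_rel j)"
proof
  have transfer: "functional_on D (coord_rel k) \<longleftrightarrow> functional_on D (coord_rel 0)" if "k < l" for k
    using coord_rel_iso_0[OF that] functional_on_transfer by blast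
  assume "functional_on D (coord_rel j)"
  then have functional: "functional_on D (coord_rel k)" if "k < l" for k
    using transfer[OF assms(3)] transfer[OF that] by simp
  have "functional_on \<Omega> E"
    unfolding functional_on_def
  proof (intro ballI impI)
    fix x y y' assume "x \<in> \<Omega>" "y \<in> \<Omega>" "y' \<in> \<Omega>" "E x y" "E x y'"
    show "y = y'"
    proof (rule Omega_eqI[OF \<open>y \<in> \<Omega>\<close> \<open>y' \<in> \<Omega>\<close>])
      fix k assume "k < l"
      then have "coord_rel k (x k) (y k)" "coord_rel k (x k) (y' k)"
        using \<open>E x y\<close> \<open>E x y'\<close> unfolding adjacent_iff_coord_rel by blast+
      then show "y k = y' k"
        using functional[OF \<open>k < l\<close>] coord_rel_in_D \<open>k < l\<close> unfolding functional_on_def by blast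
    qed
  qed
  then have "\<Omega> \<subseteq> {\<alpha>\<^sub>\<Omega>, \<beta>}"
    by (rule connected_functional_graph_subset[OF graph_E, OF assms(1) adjacent_\<alpha>_\<beta>])
  then have "card \<Omega> \<le> 2"
    using card_mono[of "{\<alpha>\<^sub>\<Omega>, \<beta>}" \<Omega>] card_insert_le_m1[of 2 "{\<beta>}" \<alpha>\<^sub>\<Omega>] by simp
  moreover have "card \<Omega> \<ge> 4"
  proof -
    have "(2::nat) ^ 2 \<le> 2 ^ l" "(2::nat) ^ l \<le> card D ^ l"
      using power_increasing[OF assms(2), of "2::nat"] power_mono[OF card_D] by simp_all
    then show ?thesis
      by (simp add: card_Omega)
  qed
  ultimately show False
    by simp
qed

lemma not_two_arc_transitive:
  assumes "connected_graph \<Omega> E" "2 \<le> l"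
  shows "\<not> two_arc_transitive G E"
proof
  assume two_arc: "two_arc_transitive G E"
  define branch where "branch j p u v \<longleftrightarrow>
    p \<in> D \<and> u \<in> D \<and> v \<in> D \<and> u \<noteq> v \<and> coord_rel j p u \<and> coord_rel j p v" for j p u v
  have "\<forall>j\<in>{..<l}. \<exists>t. branch j (fst t) (fst (snd t)) (snd (snd t))"
  proof
    fix j assume "j \<in> {..<l}"
    then obtain p u v where "branch j p u v"
      using coord_rel_not_functional[OF assms] unfolding functional_on_def branch_def by blast
    then show "\<exists>t. branch j (fst t) (fst (snd t)) (snd (snd t))"
      by (intro exI[of _ "(p, u, v)"]) simp
  qed
  then obtain t where "\<forall>j\<in>{..<l}. branch j (fst (t j)) (fst (snd (t j))) (snd (snd (t j)))"
    using bchoice[of "{..<l}" "\<lambda>j t. branch j (fst t) (fst (snd t)) (snd (snd t))"] by blast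
  then obtain p u v where puv: "\<And>j. j < l \<Longrightarrow> p j \<in> D \<and> u j \<in> D \<and> v j \<in> D \<and> u j \<noteq> v j
      \<and> coord_rel j (p j) (u j) \<and> coord_rel j (p j) (v j)"
    unfolding branch_def
    by (intro that[of "\<lambda>j. fst (t j)" "\<lambda>j. fst (snd (t j))" "\<lambda>j. snd (snd (t j))"]) auto
  define w\<^sub>0 where "w\<^sub>0 = (\<lambda>j\<in>{..<l}. u j)"
  define w\<^sub>1 where "w\<^sub>1 = (\<lambda>j\<in>{..<l}. p j)"
  define w\<^sub>2 where "w\<^sub>2 = (\<lambda>j\<in>{..<l}. v j)"
  have "0 < l" "1 < l"
    using assms(2) by simp_all
  have in_Omega: "w\<^sub>0 \<in> \<Omega>" "w\<^sub>1 \<in> \<Omega>" "w\<^sub>2 \<in> \<Omega>" "w\<^sub>0(0 := v 0) \<in> \<Omega>"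
    using puv \<open>0 < l\<close> by (simp_all add: w\<^sub>0_def w\<^sub>1_def w\<^sub>2_def restrict_in_Omega fun_upd_in_Omega)
  have "E w\<^sub>0 w\<^sub>1" "E w\<^sub>1 w\<^sub>2" "E w\<^sub>1 (w\<^sub>0(0 := v 0))"
    using in_Omega puv coord_rel_sym by (auto simp: adjacent_iff_coord_rel w\<^sub>0_def w\<^sub>1_def w\<^sub>2_def)
  moreover have "w\<^sub>0 \<noteq> w\<^sub>2" "w\<^sub>0 \<noteq> w\<^sub>0(0 := v 0)"
    using puv[OF \<open>0 < l\<close>] \<open>0 < l\<close> by (auto simp: w\<^sub>0_def w\<^sub>2_def dest: fun_cong[where x = 0])
  ultimately obtain \<sigma> where "\<sigma> \<in> G" "\<sigma> w\<^sub>0 = w\<^sub>0" "\<sigma> (w\<^sub>0(0 := v 0)) = w\<^sub>2"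
    using two_arc unfolding two_arc_transitive_def by blast
  then obtain h g where \<sigma>: "wr_elem l D h g \<sigma>"
    using G_wr_elem by blast
  have "w\<^sub>2 = w\<^sub>0(h 0 := g 0 (v 0))"
    using wr_elem_fun_upd[OF \<sigma> in_Omega(1) \<open>0 < l\<close>] puv \<open>0 < l\<close> \<open>\<sigma> w\<^sub>0 = w\<^sub>0\<close> \<open>\<sigma> (w\<^sub>0(0 := v 0)) = w\<^sub>2\<close>
    by simp
  moreover obtain k where "k < l" "k \<noteq> h 0"
    using \<open>0 < l\<close> \<open>1 < l\<close> by (metis zero_neq_one)
  ultimately have "v k = u k"
    by (auto simp: w\<^sub>0_def w\<^sub>2_def dest: fun_cong[where x = k])
  then show False
    using puv[OF \<open>k < l\<close>] by simp
qed

end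

theorem proposition3p4:
  fixes D :: "'a set" and l :: nat
    and G M :: "((nat \<Rightarrow> 'a) \<Rightarrow> (nat \<Rightarrow> 'a)) set"
    and E :: "(nat \<Rightarrow> 'a) \<Rightarrow> (nat \<Rightarrow> 'a) \<Rightarrow> bool"
  assumes "finite D" and "card D \<ge> 2" and "l \<ge> 2"
    and "subgroup G (BijGroup (Omega l D))" and "G \<subseteq> Wr l D"
    and "minimal_normal (Omega l D) G M"
    and "transitive_on (Omega l D) M"
    and "graph (Omega l D) E" and "connected_graph (Omega l D) E"
    and "G \<subseteq> automorphisms_of (Omega l D) E"
    and "arc_transitive M E"
    and "normal_inclusion l D M"
  shows "(\<forall>\<alpha> \<beta>. \<alpha> \<in> D \<and> \<beta> \<in> Omega l D \<and> E (\<lambda>i\<in>{..<l}. \<alpha>) \<beta> \<longrightarrow>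
            graph_iso (Omega l D) E (Omega l D)
              (direct_power l (orbit_graph (component l D M 0) \<alpha> (\<beta> 0))))
         \<and> \<not> two_arc_transitive G E"
proof -
  interpret wreath_minimal_normal D l G M
    using assms by (simp add: wreath_minimal_normal_def)
  have arc_graph: "wreath_arc_graph D l G M E \<alpha> \<beta>" if "\<alpha> \<in> D" "E (\<lambda>i\<in>{..<l}. \<alpha>) \<beta>" for \<alpha> \<beta>
    using assms that wreath_minimal_normal_axioms by (simp add: wreath_arc_graph_def wreath_arc_graph_axioms_def)
  obtain \<alpha> d where "\<alpha> \<in> D" "d \<in> D" "d \<noteq> \<alpha>"
    by (rule obtain_distinct_in_D)
  moreover have "0 < l"
    using assms(3) by simp
  ultimately have "(\<lambda>i\<in>{..<l}. \<alpha>) \<in> \<Omega>" "(\<lambda>i\<in>{..<l}. \<alpha>)(0 := d) \<in> \<Omega>"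
    and "(\<lambda>i\<in>{..<l}. \<alpha>) \<noteq> (\<lambda>i\<in>{..<l}. \<alpha>)(0 := d)"
    by (auto simp: restrict_in_Omega fun_upd_in_Omega dest: fun_cong[where x = 0])
  then obtain \<beta> where "E (\<lambda>i\<in>{..<l}. \<alpha>) \<beta>"
    by (rule connected_graph_neighbour[OF assms(9)])
  then have "\<not> two_arc_transitive G E"
    using wreath_arc_graph.not_two_arc_transitive[OF arc_graph] \<open>\<alpha> \<in> D\<close> assms(3,9) by blast
  moreover have "graph_iso \<Omega> E \<Omega> (direct_power l (orbit_graph (C 0) \<alpha>' (\<beta>' 0)))"
    if "\<alpha>' \<in> D" "E (\<lambda>i\<in>{..<l}. \<alpha>') \<beta>'" for \<alpha>' \<beta>'
    using wreath_arc_graph.graph_iso_direct_power[OF arc_graph[OF that]] .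
  ultimately show ?thesis
    by blast
qed

end
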